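(* Let $M(i)$ be a maximal matching of $G(i)$ and let $V_{cover}(i)$ be the set of endpoints of edges of $M(i)$, which is a $2$-approximate minimum vertex cover of $G(i)$. If $i\le j\le i+\frac14|M(i)|$, then $V_{cover}(i\rightarrow j)$ is a $5$-approximation to the minimum vertex cover of $G(j)$.
   Context: A graph undergoes a sequence of updates numbered $1,2,\dots$, each inserting or deleting one edge; $G(i)$ is the graph after the $i$-th update. A matching is maximal if no edge of the graph has both endpoints unmatched. $V_{cover}(i\rightarrow j)$ is obtained from $V_{cover}(i)$ by adding all endpoints of edges inserted during updates $i+1,\dots,j$; it is a vertex cover of $G(j)$. A set is an $\alpha$-approximation to the minimum vertex cover if it is a vertex cover of size at most $\alpha$ times the minimum vertex cover size. *)

theory Defs
  imports Complex_Main
begin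

text \<open>Undirected simple graphs are represented by their edge sets; an edge is a
two-element vertex set.\<close>

definition is_edge :: "'a set \<Rightarrow> bool" where
  "is_edge e \<longleftrightarrow> (\<exists>u v. u \<noteq> v \<and> e = {u, v})"

definition graph :: "'a set set \<Rightarrow> bool" where
  "graph E \<longleftrightarrow> finite E \<and> (\<forall>e\<in>E. is_edge e)"

definition matching :: "'a set set \<Rightarrow> 'a set set \<Rightarrow> bool" where
  "matching M E \<longleftrightarrow> M \<subseteq> E \<and> (\<forall>e1\<in>M. \<forall>e2\<in>M. e1 \<noteq> e2 \<longrightarrow> e1 \<inter> e2 = {})"

definition maximal_matching :: "'a set set \<Rightarrow> 'a set set \<Rightarrow> bool" where
  "maximal_matching M E \<longleftrightarrow> matching M E \<and> (\<forall>e\<in>E. e \<inter> \<Union>M \<noteq> {})"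

definition vertex_cover :: "'a set \<Rightarrow> 'a set set \<Rightarrow> bool" where
  "vertex_cover C E \<longleftrightarrow> (\<forall>e\<in>E. e \<inter> C \<noteq> {})"

definition min_vc_size :: "'a set set \<Rightarrow> nat" where
  "min_vc_size E = (LEAST n. \<exists>C. finite C \<and> vertex_cover C E \<and> card C = n)"

definition approx_min_vc :: "real \<Rightarrow> 'a set \<Rightarrow> 'a set set \<Rightarrow> bool" where
  "approx_min_vc \<alpha> C E \<longleftrightarrow> finite C \<and> vertex_cover C E \<and> real (card C) \<le> \<alpha> * real (min_vc_size E)"

definition update_sequence :: "(nat \<Rightarrow> 'a set set) \<Rightarrow> bool" where
  "update_sequence G \<longleftrightarrow> graph (G 0) \<and>
     (\<forall>k\<ge>1. (\<exists>e. is_edge e \<and> e \<notin> G (k - 1) \<and> G k = insert e (G (k - 1)))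
            \<or> (\<exists>e. e \<in> G (k - 1) \<and> G k = G (k - 1) - {e}))"

definition inserted :: "(nat \<Rightarrow> 'a set set) \<Rightarrow> nat \<Rightarrow> 'a set set" where
  "inserted G k = G k - G (k - 1)"

text \<open>V_cover(i \<rightarrow> j): C plus all endpoints of edges inserted during updates i+1..j.\<close>
definition cover_extend :: "(nat \<Rightarrow> 'a set set) \<Rightarrow> 'a set \<Rightarrow> nat \<Rightarrow> nat \<Rightarrow> 'a set" where
  "cover_extend G C i j = C \<union> (\<Union>k\<in>{i<..j}. \<Union>(inserted G k))"

end

theory Submission
  imports Defs
begin

text \<open>Each of the \<open>j - i\<close> updates adds at most two vertices to the cover, so
  \<open>|V\<^sub>c\<^sub>o\<^sub>v\<^sub>e\<^sub>r(i \<rightarrow> j)| \<le> 2|M(i)| + 2(j - i)\<close>. Each update also deletes at most one edge of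
  \<open>M(i)\<close>, so \<open>G(j)\<close> still contains a matching of size \<open>|M(i)| - (j - i)\<close>, and every vertex
  cover of \<open>G(j)\<close> has at least that many vertices. With \<open>j - i \<le> |M(i)|/4\<close> the ratio is
  at most \<open>(5/2) / (3/4) < 5\<close>.\<close>

lemma is_edge_finite_card:
  assumes "is_edge e"
  shows "finite e" and "card e = 2" and "e \<noteq> {}"
  using assms unfolding is_edge_def by auto

lemma update_sequence_Suc:
  assumes "update_sequence G"
  shows "(\<exists>e. is_edge e \<and> e \<notin> G k \<and> G (Suc k) = insert e (G k))
       \<or> (\<exists>e. e \<in> G k \<and> G (Suc k) = G k - {e})"
proof -
  have "\<forall>k\<ge>1. (\<exists>e. is_edge e \<and> e \<notin> G (k - 1) \<and> G k = insert e (G (k - 1)))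
            \<or> (\<exists>e. e \<in> G (k - 1) \<and> G k = G (k - 1) - {e})"
    using assms unfolding update_sequence_def by blast
  from spec[OF this, of "Suc k"] show ?thesis by simp
qed

lemma update_sequence_graph:
  assumes "update_sequence G"
  shows "graph (G k)"
proof (induction k)
  case 0
  then show ?case using assms unfolding update_sequence_def by simp
next
  case (Suc k)
  then show ?case using update_sequence_Suc[OF assms, of k] unfolding graph_def by auto
qed

lemma update_sequence_inserted_vertices:
  assumes "update_sequence G"
  shows "finite (\<Union>(inserted G k))" and "card (\<Union>(inserted G k)) \<le> 2"
proof -
  consider "inserted G k = {}" | e where "is_edge e" and "inserted G k = {e}"
  proof (cases k)
    case (Suc k')
    then show ?thesis
      using that update_sequence_Suc[OF assms, of k'] unfolding inserted_def by auto
  qed (simp add: inserted_def that)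
  then show "finite (\<Union>(inserted G k))" and "card (\<Union>(inserted G k)) \<le> 2"
    by (cases; simp add: is_edge_finite_card)+
qed

lemma update_sequence_new_edge_inserted:
  assumes "update_sequence G" and "i \<le> j" and "e \<in> G j" and "e \<notin> G i"
  shows "\<exists>k\<in>{i<..j}. e \<in> inserted G k"
  using assms(2-3)
proof (induction j rule: dec_induct)
  case base
  then show ?case using assms(4) by simp
next
  case (step j)
  show ?case
  proof (cases "e \<in> G j")
    case True
    then show ?thesis using step.IH by fastforce
  next
    case False
    then show ?thesis using step.prems step.hyps unfolding inserted_def
      by (intro bexI[of _ "Suc j"]) auto
  qed
qed

lemma update_sequence_card_Int_le:
  assumes "update_sequence G" and "finite A" and "i \<le> j"
  shows "card (A \<inter> G i) \<le> card (A \<inter> G j) + (j - i)"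
  using assms(3)
proof (induction j rule: dec_induct)
  case (step j)
  obtain e where "A \<inter> G j \<subseteq> insert e (A \<inter> G (Suc j))"
    using update_sequence_Suc[OF assms(1), of j] by blast
  then have "card (A \<inter> G j) \<le> card (insert e (A \<inter> G (Suc j)))"
    using assms(2) by (intro card_mono) auto
  also have "\<dots> \<le> Suc (card (A \<inter> G (Suc j)))"
    using assms(2) by (simp add: card_insert_if)
  finally have "card (A \<inter> G j) \<le> Suc (card (A \<inter> G (Suc j)))" .
  then show ?case using step by linarith
qed simp

lemma vertex_cover_cover_extend:
  assumes "update_sequence G" and "vertex_cover C (G i)" and "i \<le> j"
  shows "vertex_cover (cover_extend G C i j) (G j)"
  unfolding vertex_cover_def
proof
  fix e assume e: "e \<in> G j"
  show "e \<inter> cover_extend G C i j \<noteq> {}"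
  proof (cases "e \<in> G i")
    case True
    then show ?thesis using assms(2) unfolding vertex_cover_def cover_extend_def by blast
  next
    case False
    then obtain k where k: "k \<in> {i<..j}" "e \<in> inserted G k"
      using update_sequence_new_edge_inserted[OF assms(1,3) e] by blast
    have "e \<noteq> {}"
      using update_sequence_graph[OF assms(1), of j] e is_edge_finite_card(3)
      unfolding graph_def by blast
    moreover have "e \<subseteq> cover_extend G C i j" using k unfolding cover_extend_def by blast
    ultimately show ?thesis by blast
  qed
qed

lemma card_cover_extend_le:
  assumes "update_sequence G" and "finite C"
  shows "finite (cover_extend G C i j)" and "card (cover_extend G C i j) \<le> card C + 2 * (j - i)"
proof -
  let ?I = "\<Union>k\<in>{i<..j}. \<Union>(inserted G k)"
  have "card ?I \<le> (\<Sum>k\<in>{i<..j}. card (\<Union>(inserted G k)))"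
    by (rule card_UN_le) simp
  also have "\<dots> \<le> (\<Sum>k\<in>{i<..j}. 2)"
    by (intro sum_mono update_sequence_inserted_vertices[OF assms(1)])
  finally have "card ?I \<le> 2 * (j - i)" by simp
  then show "card (cover_extend G C i j) \<le> card C + 2 * (j - i)"
    unfolding cover_extend_def using card_Un_le[of C ?I] by linarith
  show "finite (cover_extend G C i j)"
    unfolding cover_extend_def
    using assms(2) update_sequence_inserted_vertices(1)[OF assms(1)] by simp
qed

lemma card_matching_le_vertex_cover:
  assumes "matching M E" and "vertex_cover C E" and "finite C"
  shows "card M \<le> card C"
proof -
  define pick where "pick e = (SOME v. v \<in> e \<inter> C)" for e
  have pick: "pick e \<in> e \<inter> C" if "e \<in> M" for e
  proof -
    have "e \<in> E" using assms(1) that unfolding matching_def by blast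
    then have "\<exists>v. v \<in> e \<inter> C" using assms(2) unfolding vertex_cover_def by blast
    then show ?thesis unfolding pick_def by (rule someI_ex)
  qed
  have "inj_on pick M"
  proof (rule inj_onI)
    fix x y assume x: "x \<in> M" and y: "y \<in> M" and eq: "pick x = pick y"
    have "pick x \<in> x \<inter> y" using pick[OF x] pick[OF y] unfolding eq by blast
    then show "x = y" using assms(1) x y unfolding matching_def by blast
  qed
  moreover have "pick ` M \<subseteq> C" using pick by blast
  ultimately show ?thesis using card_inj_on_le assms(3) by blast
qed

lemma min_vc_size_attained:
  assumes "finite C" and "vertex_cover C E"
  obtains C' where "finite C'" and "vertex_cover C' E" and "card C' = min_vc_size E"
  using LeastI_ex[of "\<lambda>n. \<exists>C. finite C \<and> vertex_cover C E \<and> card C = n"] assms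
  unfolding min_vc_size_def by blast

lemma card_matching_le_min_vc_size:
  assumes "matching M E" and "finite C" and "vertex_cover C E"
  shows "card M \<le> min_vc_size E"
  using min_vc_size_attained[OF assms(2,3)] card_matching_le_vertex_cover[OF assms(1)] by metis

lemma card_Union_matching_le:
  assumes "graph E" and "matching M E"
  shows "finite (\<Union>M)" and "card (\<Union>M) \<le> 2 * card M" and "finite M"
proof -
  have edges: "is_edge e" if "e \<in> M" for e
    using assms that unfolding graph_def matching_def by blast
  show "finite M" using assms finite_subset unfolding graph_def matching_def by blast
  then show "finite (\<Union>M)" using edges is_edge_finite_card(1) by blast
  have "card (\<Union>M) \<le> (\<Sum>e\<in>M. card e)" by (rule card_Union_le_sum_card)
  also have "\<dots> = (\<Sum>e\<in>M. 2)" using edges is_edge_finite_card(2) by (intro sum.cong) auto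
  finally show "card (\<Union>M) \<le> 2 * card M" by simp
qed

theorem lemma12:
  fixes G :: "nat \<Rightarrow> 'a set set" and M :: "'a set set" and i j :: nat
  assumes "update_sequence G"
    and "maximal_matching M (G i)"
    and "i \<le> j" and "real j \<le> real i + real (card M) / 4"
  shows "approx_min_vc 5 (cover_extend G (\<Union>M) i j) (G j)"
proof -
  let ?C = "cover_extend G (\<Union>M) i j" and ?opt = "min_vc_size (G j)"
  have matching: "matching M (G i)" and cover: "vertex_cover (\<Union>M) (G i)"
    using assms(2) unfolding maximal_matching_def vertex_cover_def by auto
  note card_UM = card_Union_matching_le[OF update_sequence_graph[OF assms(1)] matching]
  note card_C = card_cover_extend_le[OF assms(1) card_UM(1), of i j]
  have vc: "vertex_cover ?C (G j)" by (rule vertex_cover_cover_extend[OF assms(1) cover assms(3)])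
  have "matching (M \<inter> G j) (G j)" using matching unfolding matching_def by auto
  then have "card (M \<inter> G j) \<le> ?opt"
    by (rule card_matching_le_min_vc_size[OF _ card_C(1) vc])
  moreover have "card M \<le> card (M \<inter> G j) + (j - i)"
    using update_sequence_card_Int_le[OF assms(1) card_UM(3) assms(3)] matching
    unfolding matching_def by (simp add: Int_absorb2)
  ultimately have "card M \<le> ?opt + (j - i)" by linarith
  moreover have "card ?C \<le> 2 * card M + 2 * (j - i)" using card_C(2) card_UM(2) by linarith
  moreover have "4 * real (j - i) \<le> real (card M)" using assms(3,4) by (simp add: of_nat_diff)
  ultimately have "real (card ?C) \<le> 5 * real ?opt" by linarith
  then show ?thesis unfolding approx_min_vc_def using card_C(1) vc by simp
qed

end
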